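(* Let $k\ge 3$ be an integer and let $G\in\mathcal{F}_v(k-1,k-1;k)$ with $|V(G)|=F_v(k-1,k-1;k)$. Let $f(G)$ be the largest number of vertices of a $K_{k-1}$-free induced subgraph of $G$. Then $$F_v(J_k,J_k;k)\le 3F_v(k-1,k-1;k)-f(G).$$
   Context: All graphs are finite and simple. $J_n$ denotes $K_n$ with one edge removed. An integer $a$ used in place of a graph denotes $K_a$. "A graph $F$ contains $H$" means $F$ has a (not necessarily induced) subgraph isomorphic to $H$. $G\rightarrow(H_1,H_2)^v$ means: for every partition $V(G)=X_1\cup X_2$ there is $i$ such that the subgraph induced by $X_i$ contains $H_i$. $\mathcal{F}_v(H_1,H_2;k)$ is the set of $K_k$-free graphs $G$ with $G\rightarrow(H_1,H_2)^v$, and $F_v(H_1,H_2;k)$ is the minimum number of vertices of a graph in this set. *)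

theory Defs
  imports Main
begin

type_synonym 'a graph = "'a set \<times> 'a set set"

definition verts :: "'a graph \<Rightarrow> 'a set" where "verts G = fst G"
definition edges :: "'a graph \<Rightarrow> 'a set set" where "edges G = snd G"

definition wf_graph :: "'a graph \<Rightarrow> bool" where
  "wf_graph G \<longleftrightarrow> finite (verts G) \<and>
     (\<forall>e\<in>edges G. \<exists>u v. u \<noteq> v \<and> u \<in> verts G \<and> v \<in> verts G \<and> e = {u, v})"

definition contains :: "'a graph \<Rightarrow> 'b graph \<Rightarrow> bool" where
  "contains F H \<longleftrightarrow> (\<exists>f. inj_on f (verts H) \<and> f ` verts H \<subseteq> verts F \<and>
     (\<forall>e\<in>edges H. f ` e \<in> edges F))"

definition induced :: "'a graph \<Rightarrow> 'a set \<Rightarrow> 'a graph" where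
  "induced G X = (X \<inter> verts G, {e \<in> edges G. e \<subseteq> X})"

definition complete :: "nat \<Rightarrow> nat graph" where
  "complete a = ({0..<a}, {{i, j} | i j. i < a \<and> j < a \<and> i \<noteq> j})"

definition J :: "nat \<Rightarrow> nat graph" where
  "J n = ({0..<n}, {{i, j} | i j. i < n \<and> j < n \<and> i \<noteq> j} - {{0, 1}})"

definition vertex_arrows :: "'a graph \<Rightarrow> 'b graph \<Rightarrow> 'c graph \<Rightarrow> bool" where
  "vertex_arrows G H1 H2 \<longleftrightarrow> (\<forall>X1 X2. X1 \<union> X2 = verts G \<and> X1 \<inter> X2 = {} \<longrightarrow>
      contains (induced G X1) H1 \<or> contains (induced G X2) H2)"

definition Kfree :: "'a graph \<Rightarrow> nat \<Rightarrow> bool" where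
  "Kfree G k \<longleftrightarrow> \<not> contains G (complete k)"

text \<open>The class F_v(H1,H2;k); graphs are taken with vertices in nat (every finite
  graph is isomorphic to one of these).\<close>
definition Fv_class :: "'b graph \<Rightarrow> 'c graph \<Rightarrow> nat \<Rightarrow> nat graph set" where
  "Fv_class H1 H2 k = {G. wf_graph G \<and> Kfree G k \<and> vertex_arrows G H1 H2}"

definition Fv :: "'b graph \<Rightarrow> 'c graph \<Rightarrow> nat \<Rightarrow> nat" where
  "Fv H1 H2 k = (LEAST n. \<exists>G \<in> Fv_class H1 H2 k. card (verts G) = n)"

definition fG :: "'a graph \<Rightarrow> nat \<Rightarrow> nat" where
  "fG G k = Max {card X | X. X \<subseteq> verts G \<and> Kfree (induced G X) (k - 1)}"

end

theory Submission
  imports Defs "HOL-Library.Nat_Bijection"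
begin

text \<open>Blow up the optimal graph \<open>G\<close> for \<open>(K_(k-1), K_(k-1))\<close> by replacing each
  vertex with an independent set of copies: two copies of each vertex of a largest
  \<open>K_(k-1)\<close>-free set \<open>A\<close>, three copies of every other vertex. The blow-up maps
  homomorphically onto \<open>G\<close>, so it is still \<open>K_k\<close>-free, and it has \<open>3|V(G)| - |A|\<close>
  vertices. Given a 2-colouring of the blow-up, give a vertex \<open>v\<close> of \<open>G\<close> colour 1 if
  two of its copies have colour 1, or if \<open>v \<in> A\<close> and at most one copy has colour 2.
  A monochromatic \<open>K_(k-1)\<close> in \<open>G\<close> then lifts to a \<open>J_k\<close> of the same colour: every
  vertex of the clique has a copy of that colour and some vertex has two (in colour 1
  because the clique does not lie inside \<open>A\<close>, in colour 2 by pigeonhole on the copies);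
  these two copies are the non-adjacent pair of \<open>J_k\<close>.\<close>

lemma verts_complete [simp]: "verts (complete n) = {..<n}"
  by (auto simp: complete_def verts_def)

lemma verts_J [simp]: "verts (J n) = {..<n}"
  by (auto simp: J_def verts_def)

lemma edges_J: "edges (J n) = {{i, j} | i j. i < n \<and> j < n \<and> i \<noteq> j} - {{0, 1}}"
  by (simp add: J_def edges_def)

lemma verts_induced [simp]: "verts (induced G X) = X \<inter> verts G"
  by (simp add: induced_def verts_def)

lemma edges_induced [simp]: "edges (induced G X) = {e \<in> edges G. e \<subseteq> X}"
  by (simp add: induced_def edges_def)

lemma edges_complete: "edges (complete n) = {{i, j} | i j. i < n \<and> j < n \<and> i \<noteq> j}"
  by (simp add: complete_def edges_def)

lemma contains_complete_iff:
  "contains F (complete n) \<longleftrightarrow> (\<exists>f. inj_on f {..<n} \<and> f ` {..<n} \<subseteq> verts F \<and>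
     (\<forall>i<n. \<forall>j<n. i \<noteq> j \<longrightarrow> {f i, f j} \<in> edges F))"
proof -
  have "(\<forall>e\<in>edges (complete n). f ` e \<in> edges F) \<longleftrightarrow>
      (\<forall>i<n. \<forall>j<n. i \<noteq> j \<longrightarrow> {f i, f j} \<in> edges F)" for f
  proof
    assume "\<forall>e\<in>edges (complete n). f ` e \<in> edges F"
    then show "\<forall>i<n. \<forall>j<n. i \<noteq> j \<longrightarrow> {f i, f j} \<in> edges F"
    proof (intro allI impI)
      fix i j assume "i < n" "j < n" "i \<noteq> j"
      then have "{i, j} \<in> edges (complete n)"
        unfolding edges_complete by blast
      then show "{f i, f j} \<in> edges F"
        using \<open>\<forall>e\<in>edges (complete n). f ` e \<in> edges F\<close> by force
    qed
  next
    assume "\<forall>i<n. \<forall>j<n. i \<noteq> j \<longrightarrow> {f i, f j} \<in> edges F"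
    then show "\<forall>e\<in>edges (complete n). f ` e \<in> edges F"
      unfolding edges_complete by auto
  qed
  then show ?thesis
    unfolding contains_def by simp
qed

lemma contains_induced_complete_iff:
  "contains (induced G Y) (complete n) \<longleftrightarrow> (\<exists>f. inj_on f {..<n} \<and> f ` {..<n} \<subseteq> Y \<inter> verts G \<and>
     (\<forall>i<n. \<forall>j<n. i \<noteq> j \<longrightarrow> {f i, f j} \<in> edges G))"
  unfolding contains_complete_iff edges_induced verts_induced
  by (intro ex_cong1 conj_cong refl) (auto simp: image_subset_iff)

lemma Kfree_pos: "Kfree G n \<Longrightarrow> 0 < n"
  by (cases n) (simp_all add: Kfree_def contains_complete_iff)

lemma Kfree_empty: "0 < n \<Longrightarrow> Kfree (induced G {}) n"
  by (auto simp: Kfree_def contains_complete_iff)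

lemma Kfree_induced_clique_not_subset:
  assumes "Kfree (induced G A) n" "inj_on g {..<n}" "g ` {..<n} \<subseteq> verts G"
    "\<forall>i<n. \<forall>j<n. i \<noteq> j \<longrightarrow> {g i, g j} \<in> edges G"
  obtains u where "u < n" "g u \<notin> A"
proof -
  have "\<not> g ` {..<n} \<subseteq> A"
  proof
    assume "g ` {..<n} \<subseteq> A"
    then have "contains (induced G A) (complete n)"
      unfolding contains_induced_complete_iff by (intro exI[of _ g]) (use assms in auto)
    then show False
      using assms(1) unfolding Kfree_def by simp
  qed
  then show ?thesis
    using that by auto
qed

lemma wf_graph_edge_neq: "wf_graph G \<Longrightarrow> {x, y} \<in> edges G \<Longrightarrow> x \<noteq> y"
  unfolding wf_graph_def by (metis doubleton_eq_iff insert_absorb2)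

lemma contains_complete_hom:
  assumes "wf_graph G"
    and "\<forall>x\<in>verts F. \<pi> x \<in> verts G"
    and "\<forall>x y. {x, y} \<in> edges F \<longrightarrow> {\<pi> x, \<pi> y} \<in> edges G"
    and "contains F (complete n)"
  shows "contains G (complete n)"
proof -
  obtain f where f: "inj_on f {..<n}" "f ` {..<n} \<subseteq> verts F"
      "\<forall>i<n. \<forall>j<n. i \<noteq> j \<longrightarrow> {f i, f j} \<in> edges F"
    using assms(4) unfolding contains_complete_iff by blast
  then have adj: "\<forall>i<n. \<forall>j<n. i \<noteq> j \<longrightarrow> {\<pi> (f i), \<pi> (f j)} \<in> edges G"
    using assms(3) by blast
  have "inj_on (\<pi> \<circ> f) {..<n}"
    by (rule inj_onI) (use adj wf_graph_edge_neq[OF assms(1)] in fastforce)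
  moreover have "(\<pi> \<circ> f) ` {..<n} \<subseteq> verts G"
    using f(2) assms(2) by auto
  ultimately show ?thesis
    unfolding contains_complete_iff using adj by (metis comp_apply)
qed

text \<open>\<open>a\<close> and \<open>h 0\<close> lie over the same clique vertex; they become the non-adjacent
  vertices \<open>0\<close> and \<open>1\<close> of \<open>J (Suc n)\<close>.\<close>

lemma contains_J_lift_0:
  fixes \<pi> :: "'a \<Rightarrow> 'b"
  assumes g_inj: "inj_on g {..<n}"
    and g_adj: "\<forall>i<n. \<forall>j<n. i \<noteq> j \<longrightarrow> {g i, g j} \<in> edges G"
    and h: "\<forall>i<n. h i \<in> verts F \<and> \<pi> (h i) = g i"
    and a: "a \<in> verts F" "\<pi> a = g 0" "a \<noteq> h 0"
    and lift: "\<forall>x\<in>verts F. \<forall>y\<in>verts F. {\<pi> x, \<pi> y} \<in> edges G \<longrightarrow> {x, y} \<in> edges F"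
  shows "contains F (J (Suc n))"
proof -
  define \<rho> where "\<rho> j = (case j of 0 \<Rightarrow> 0 | Suc i \<Rightarrow> i)" for j :: nat
  define \<phi> where "\<phi> j = (case j of 0 \<Rightarrow> a | Suc i \<Rightarrow> h i)" for j
  have \<phi>_verts: "\<phi> j \<in> verts F" if "j < Suc n" for j
    using that h a(1) by (cases j) (auto simp: \<phi>_def)
  have \<pi>\<phi>: "\<pi> (\<phi> j) = g (\<rho> j)" if "j < Suc n" for j
    using that h a(2) by (cases j) (auto simp: \<phi>_def \<rho>_def)
  have \<rho>_less: "\<rho> j < n" if "j < Suc n" "0 < n" for j
    using that by (cases j) (auto simp: \<rho>_def)
  have \<rho>_neq: "\<rho> i \<noteq> \<rho> j" if "i \<noteq> j" "{i, j} \<noteq> {0, 1}" for i j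
    using that by (cases i; cases j) (auto simp: \<rho>_def)
  have "inj_on \<phi> {..<Suc n}"
  proof (rule inj_onI)
    fix i j assume i: "i \<in> {..<Suc n}" and j: "j \<in> {..<Suc n}" and eq: "\<phi> i = \<phi> j"
    show "i = j"
    proof (rule ccontr)
      assume "i \<noteq> j"
      then have "0 < n" using i j by auto
      have "g (\<rho> i) = g (\<rho> j)"
        using \<pi>\<phi>[of i] \<pi>\<phi>[of j] i j eq by simp
      then have "\<rho> i = \<rho> j"
        by (rule inj_onD[OF g_inj]) (use \<rho>_less \<open>0 < n\<close> i j in auto)
      then have "{i, j} = {0, 1}"
        using \<rho>_neq[OF \<open>i \<noteq> j\<close>] by argo
      then have "i = 0 \<and> j = 1 \<or> i = 1 \<and> j = 0"
        by (simp add: doubleton_eq_iff)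
      then show False
        using eq a(3) by (auto simp: \<phi>_def)
    qed
  qed
  moreover have "\<phi> ` e \<in> edges F" if e_J: "e \<in> edges (J (Suc n))" for e
  proof -
    obtain i j where e: "e = {i, j}" "i < Suc n" "j < Suc n" "i \<noteq> j" "{i, j} \<noteq> {0, 1}"
      using e_J unfolding edges_J by blast
    then have "0 < n" by auto
    have "{g (\<rho> i), g (\<rho> j)} \<in> edges G"
      using g_adj \<rho>_less[OF e(2) \<open>0 < n\<close>] \<rho>_less[OF e(3) \<open>0 < n\<close>] \<rho>_neq[OF e(4,5)] by blast
    then have "{\<phi> i, \<phi> j} \<in> edges F"
      using lift \<phi>_verts[OF e(2)] \<phi>_verts[OF e(3)] \<pi>\<phi>[OF e(2)] \<pi>\<phi>[OF e(3)] by simp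
    then show ?thesis
      using e(1) by simp
  qed
  moreover have "\<phi> ` {..<Suc n} \<subseteq> verts F"
    using \<phi>_verts by blast
  ultimately show ?thesis
    unfolding contains_def verts_J by blast
qed

lemma contains_J_lift:
  fixes \<pi> :: "'a \<Rightarrow> 'b"
  assumes g_inj: "inj_on g {..<n}"
    and g_adj: "\<forall>i<n. \<forall>j<n. i \<noteq> j \<longrightarrow> {g i, g j} \<in> edges G"
    and h: "\<forall>i<n. h i \<in> verts F \<and> \<pi> (h i) = g i"
    and u: "u < n" and a: "a \<in> verts F" "\<pi> a = g u" "a \<noteq> h u"
    and lift: "\<forall>x\<in>verts F. \<forall>y\<in>verts F. {\<pi> x, \<pi> y} \<in> edges G \<longrightarrow> {x, y} \<in> edges F"
  shows "contains F (J (Suc n))"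
proof -
  define t where "t i = (if i = 0 then u else if i = u then 0 else i)" for i :: nat
  have t_less: "t i < n" if "i < n" for i
    using that u by (auto simp: t_def)
  have "inj t"
    by (auto simp: inj_def t_def split: if_splits)
  then have "inj_on (g \<circ> t) {..<n}"
    using g_inj t_less by (auto simp: inj_on_def)
  moreover have "\<forall>i<n. \<forall>j<n. i \<noteq> j \<longrightarrow> {(g \<circ> t) i, (g \<circ> t) j} \<in> edges G"
    using g_adj t_less \<open>inj t\<close> by (simp add: inj_eq)
  moreover have "\<forall>i<n. (h \<circ> t) i \<in> verts F \<and> \<pi> ((h \<circ> t) i) = (g \<circ> t) i"
    using h t_less by simp
  moreover have "\<pi> a = (g \<circ> t) 0" "a \<noteq> (h \<circ> t) 0"
    using a by (simp_all add: t_def)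
  ultimately show ?thesis
    using contains_J_lift_0[OF _ _ _ a(1) _ _ lift] by blast
qed

definition base :: "nat \<Rightarrow> nat" where
  "base x = fst (prod_decode x)"

definition blowup_verts :: "nat graph \<Rightarrow> (nat \<Rightarrow> nat) \<Rightarrow> nat set" where
  "blowup_verts G m = prod_encode ` (SIGMA v:verts G. {..<m v})"

text \<open>The copies \<open>prod_encode (v, i)\<close>, \<open>i < m v\<close>, of a vertex \<open>v\<close> are pairwise
  non-adjacent since \<open>G\<close> has no loops.\<close>

definition blowup :: "nat graph \<Rightarrow> (nat \<Rightarrow> nat) \<Rightarrow> nat graph" where
  "blowup G m = (blowup_verts G m, {{x, y} | x y. x \<in> blowup_verts G m \<and> y \<in> blowup_verts G m \<and>
     {base x, base y} \<in> edges G})"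

definition two_copies :: "nat set \<Rightarrow> nat \<Rightarrow> bool" where
  "two_copies X v \<longleftrightarrow> (\<exists>x\<in>X. \<exists>y\<in>X. x \<noteq> y \<and> base x = v \<and> base y = v)"

lemma base_prod_encode [simp]: "base (prod_encode (v, i)) = v"
  by (simp add: base_def)

lemma prod_encode_in_blowup_verts [simp]:
  "prod_encode (v, i) \<in> blowup_verts G m \<longleftrightarrow> v \<in> verts G \<and> i < m v"
  by (auto simp: blowup_verts_def inj_prod_encode inj_image_mem_iff)

lemma base_in_verts: "x \<in> blowup_verts G m \<Longrightarrow> base x \<in> verts G"
  by (auto simp: blowup_verts_def)

lemma verts_blowup [simp]: "verts (blowup G m) = blowup_verts G m"
  by (simp add: blowup_def verts_def)

lemma edges_blowup:
  "edges (blowup G m) = {{x, y} | x y. x \<in> blowup_verts G m \<and> y \<in> blowup_verts G m \<and>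
     {base x, base y} \<in> edges G}"
  by (simp add: blowup_def edges_def)

lemma edge_blowup_base:
  assumes "{x, y} \<in> edges (blowup G m)"
  shows "{base x, base y} \<in> edges G"
proof -
  obtain x' y' where "{x, y} = {x', y'}" "{base x', base y'} \<in> edges G"
    using assms unfolding edges_blowup by blast
  then show ?thesis
    by (auto simp: doubleton_eq_iff insert_commute)
qed

lemma edge_blowupI:
  "x \<in> blowup_verts G m \<Longrightarrow> y \<in> blowup_verts G m \<Longrightarrow> {base x, base y} \<in> edges G \<Longrightarrow>
    {x, y} \<in> edges (blowup G m)"
  unfolding edges_blowup by blast

lemma card_blowup_verts:
  assumes "finite (verts G)"
  shows "card (blowup_verts G m) = (\<Sum>v\<in>verts G. m v)"
  unfolding blowup_verts_def
  by (simp add: card_image inj_prod_encode card_SigmaI assms)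

lemma wf_graph_blowup:
  assumes "wf_graph G"
  shows "wf_graph (blowup G m)"
  unfolding wf_graph_def
proof (intro conjI ballI)
  show "finite (verts (blowup G m))"
    using assms by (simp add: wf_graph_def blowup_verts_def)
next
  fix e assume "e \<in> edges (blowup G m)"
  then obtain x y where e: "e = {x, y}" "x \<in> blowup_verts G m" "y \<in> blowup_verts G m"
      "{base x, base y} \<in> edges G"
    unfolding edges_blowup by blast
  then have "x \<noteq> y"
    using wf_graph_edge_neq[OF assms] by blast
  then show "\<exists>u v. u \<noteq> v \<and> u \<in> verts (blowup G m) \<and> v \<in> verts (blowup G m) \<and> e = {u, v}"
    using e by auto
qed

lemma Kfree_blowup:
  assumes "wf_graph G" "Kfree G k"
  shows "Kfree (blowup G m) k"
  using assms contains_complete_hom[OF assms(1), of "blowup G m" base]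
  by (auto simp: Kfree_def base_in_verts edge_blowup_base)

lemma contains_J_blowup:
  assumes X: "X \<subseteq> blowup_verts G m"
    and g_inj: "inj_on g {..<n}"
    and g_adj: "\<forall>i<n. \<forall>j<n. i \<noteq> j \<longrightarrow> {g i, g j} \<in> edges G"
    and g_X: "\<forall>i<n. g i \<in> base ` X"
    and u: "u < n" "two_copies X (g u)"
  shows "contains (induced (blowup G m) X) (J (Suc n))"
proof -
  have "\<forall>i. \<exists>x. i < n \<longrightarrow> x \<in> X \<and> base x = g i"
    using g_X by (metis imageE)
  then obtain h where h: "\<forall>i<n. h i \<in> X \<and> base (h i) = g i"
    by (rule choice[THEN exE])
  obtain x y where "x \<in> X" "y \<in> X" "x \<noteq> y" "base x = g u" "base y = g u"
    using u(2) unfolding two_copies_def by blast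
  then obtain a where a: "a \<in> X" "base a = g u" "a \<noteq> h u"
    by metis
  have lift: "\<forall>x\<in>verts (induced (blowup G m) X). \<forall>y\<in>verts (induced (blowup G m) X).
      {base x, base y} \<in> edges G \<longrightarrow> {x, y} \<in> edges (induced (blowup G m) X)"
    by (auto intro: edge_blowupI)
  show ?thesis
    by (rule contains_J_lift[OF g_inj g_adj _ u(1) _ _ _ lift]) (use h a X in auto)
qed

lemma two_copiesI:
  "prod_encode (v, i) \<in> X \<Longrightarrow> prod_encode (v, j) \<in> X \<Longrightarrow> i \<noteq> j \<Longrightarrow> two_copies X v"
  unfolding two_copies_def by (metis base_prod_encode prod_encode_eq prod.inject)

lemma two_copies_in_image: "two_copies X v \<Longrightarrow> v \<in> base ` X"
  unfolding two_copies_def by (metis image_eqI)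

lemma blowup_two_three_copy:
  assumes "X1 \<union> X2 = blowup_verts G (\<lambda>v. if v \<in> A then 2 else 3)" "v \<in> verts G"
    and "two_copies X1 v \<or> (v \<in> A \<and> \<not> two_copies X2 v)"
  shows "v \<in> base ` X1"
proof (cases "two_copies X1 v")
  case True
  then show ?thesis by (rule two_copies_in_image)
next
  case False
  then have "v \<in> A" "\<not> two_copies X2 v"
    using assms(3) by auto
  have "prod_encode (v, 0) \<in> X1 \<union> X2" "prod_encode (v, 1) \<in> X1 \<union> X2"
    using assms(1,2) \<open>v \<in> A\<close> by simp_all
  then have "prod_encode (v, 0) \<in> X1 \<or> prod_encode (v, 1) \<in> X1"
    using \<open>\<not> two_copies X2 v\<close> two_copiesI[of v 0 X2 1] by auto
  then show ?thesis
    by (metis base_prod_encode image_eqI)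
qed

lemma blowup_two_three_two_copies:
  assumes "X1 \<union> X2 = blowup_verts G (\<lambda>v. if v \<in> A then 2 else 3)" "v \<in> verts G"
    and "\<not> (two_copies X1 v \<or> (v \<in> A \<and> \<not> two_copies X2 v))"
  shows "two_copies X2 v"
proof (cases "v \<in> A")
  case False
  then have "prod_encode (v, 0) \<in> X1 \<union> X2" "prod_encode (v, 1) \<in> X1 \<union> X2"
    "prod_encode (v, 2) \<in> X1 \<union> X2"
    using assms(1,2) by simp_all
  then show ?thesis
    using assms(3) two_copiesI[of v 0 _ 1] two_copiesI[of v 0 _ 2] two_copiesI[of v 1 _ 2] by auto
qed (use assms(3) in simp)

lemma vertex_arrows_blowup_J:
  assumes arrows: "vertex_arrows G (complete n) (complete n)"
    and A: "A \<subseteq> verts G" "Kfree (induced G A) n"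
  defines "m \<equiv> \<lambda>v. if v \<in> A then 2 else 3"
  shows "vertex_arrows (blowup G m) (J (Suc n)) (J (Suc n))"
  unfolding vertex_arrows_def
proof (intro allI impI)
  fix X1 X2 assume "X1 \<union> X2 = verts (blowup G m) \<and> X1 \<inter> X2 = {}"
  then have X: "X1 \<union> X2 = blowup_verts G m" by simp
  define Y where "Y = {v \<in> verts G. two_copies X1 v \<or> (v \<in> A \<and> \<not> two_copies X2 v)}"
  have "Y \<union> (verts G - Y) = verts G \<and> Y \<inter> (verts G - Y) = {}"
    unfolding Y_def by auto
  then have "contains (induced G Y) (complete n) \<or> contains (induced G (verts G - Y)) (complete n)"
    by (rule arrows[unfolded vertex_arrows_def, rule_format])
  then show "contains (induced (blowup G m) X1) (J (Suc n)) \<or>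
      contains (induced (blowup G m) X2) (J (Suc n))"
  proof
    assume "contains (induced G Y) (complete n)"
    then obtain g where g: "inj_on g {..<n}" "g ` {..<n} \<subseteq> Y \<inter> verts G"
        "\<forall>i<n. \<forall>j<n. i \<noteq> j \<longrightarrow> {g i, g j} \<in> edges G"
      unfolding contains_induced_complete_iff by blast
    have "\<forall>i<n. g i \<in> base ` X1"
      using blowup_two_three_copy[OF X[unfolded m_def]] g(2) unfolding Y_def by blast
    moreover obtain u where "u < n" "g u \<notin> A"
      using Kfree_induced_clique_not_subset[OF A(2) g(1) _ g(3)] g(2) by blast
    moreover have "two_copies X1 (g u)"
      using g(2) \<open>u < n\<close> \<open>g u \<notin> A\<close> unfolding Y_def by auto
    ultimately have "contains (induced (blowup G m) X1) (J (Suc n))"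
      using contains_J_blowup[OF _ g(1,3)] X by blast
    then show ?thesis ..
  next
    assume "contains (induced G (verts G - Y)) (complete n)"
    then obtain g where g: "inj_on g {..<n}" "g ` {..<n} \<subseteq> verts G - Y"
        "\<forall>i<n. \<forall>j<n. i \<noteq> j \<longrightarrow> {g i, g j} \<in> edges G"
      unfolding contains_induced_complete_iff by blast
    have two: "two_copies X2 (g i)" if "i < n" for i
      using blowup_two_three_two_copies[OF X[unfolded m_def]] g(2) that unfolding Y_def by blast
    then have "\<forall>i<n. g i \<in> base ` X2"
      using two_copies_in_image by blast
    moreover have "0 < n"
      using Kfree_pos[OF A(2)] .
    ultimately have "contains (induced (blowup G m) X2) (J (Suc n))"
      using contains_J_blowup[OF _ g(1,3)] two X by blast
    then show ?thesis ..
  qed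
qed

lemma card_blowup_verts_two_three:
  assumes "finite (verts G)" "A \<subseteq> verts G"
  shows "card (blowup_verts G (\<lambda>v. if v \<in> A then 2 else 3)) = 3 * card (verts G) - card A"
proof -
  have "card (blowup_verts G (\<lambda>v. if v \<in> A then 2 else 3)) = 2 * card A + 3 * card (verts G - A)"
    using assms by (simp add: card_blowup_verts sum.If_cases Int_absorb1 Diff_eq[symmetric])
  also have "\<dots> = 3 * card (verts G) - card A"
    using assms card_Diff_subset[OF finite_subset[OF assms(2,1)] assms(2)] card_mono[OF assms(1,2)]
    by simp
  finally show ?thesis .
qed

lemma fG_attained:
  assumes "finite (verts G)" "2 \<le> k"
  obtains A where "A \<subseteq> verts G" "Kfree (induced G A) (k - 1)" "card A = fG G k"
proof -
  let ?S = "{card X | X. X \<subseteq> verts G \<and> Kfree (induced G X) (k - 1)}"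
  have "?S \<subseteq> {..card (verts G)}"
    using card_mono[OF assms(1)] by auto
  then have "finite ?S"
    using finite_subset by blast
  moreover have "0 \<in> ?S"
    using Kfree_empty[of "k - 1" G] assms(2) by force
  ultimately have "fG G k \<in> ?S"
    unfolding fG_def using Max_in by blast
  then obtain A where "A \<subseteq> verts G" "Kfree (induced G A) (k - 1)" "card A = fG G k"
    by auto
  then show ?thesis
    by (rule that)
qed

lemma Fv_le_card: "G \<in> Fv_class H1 H2 k \<Longrightarrow> Fv H1 H2 k \<le> card (verts G)"
  unfolding Fv_def by (rule Least_le) blast

theorem mainTheorem6:
  fixes k :: nat and G :: "nat graph"
  assumes "k \<ge> 3"
    and "G \<in> Fv_class (complete (k - 1)) (complete (k - 1)) k"
    and "card (verts G) = Fv (complete (k - 1)) (complete (k - 1)) k"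
  shows "Fv_class (J k) (J k) k \<noteq> {} \<and>
         Fv (J k) (J k) k \<le> 3 * Fv (complete (k - 1)) (complete (k - 1)) k - fG G k"
proof -
  have wf_G: "wf_graph G" and "Kfree G k"
    and arrows: "vertex_arrows G (complete (k - 1)) (complete (k - 1))"
    using assms(2) by (simp_all add: Fv_class_def)
  then have fin: "finite (verts G)"
    by (simp add: wf_graph_def)
  have "2 \<le> k"
    using assms(1) by simp
  then obtain A where A: "A \<subseteq> verts G" "Kfree (induced G A) (k - 1)" "card A = fG G k"
    by (rule fG_attained[OF fin])
  define H where "H = blowup G (\<lambda>v. if v \<in> A then 2 else 3)"
  have "vertex_arrows H (J (Suc (k - 1))) (J (Suc (k - 1)))"
    unfolding H_def by (rule vertex_arrows_blowup_J[OF arrows A(1,2)])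
  then have "H \<in> Fv_class (J k) (J k) k"
    using assms(1) wf_graph_blowup[OF wf_G] Kfree_blowup[OF wf_G \<open>Kfree G k\<close>]
    by (simp add: Fv_class_def H_def)
  moreover have "card (verts H) = 3 * card (verts G) - fG G k"
    using card_blowup_verts_two_three[OF fin A(1)] A(3) by (simp add: H_def)
  ultimately show ?thesis
    using Fv_le_card assms(3) by fastforce
qed

end
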